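(* Let $V$ be a fixed finite set. If $\mu_1,\mu_2\colon\binom V2\to\mathbb{Z}_+$ satisfy $\mu_1(e)\leqslant\mu_2(e)$ for all $e\in\binom V2$, then $n(\mu_1,V)\leqslant n(\mu_2,V)$.
   Context: For a finite set $V$ with $|V|=n$ and $\mu\colon\binom V2\to\mathbb{Z}_+$, $n(\mu,V)=\sum_{J\subseteq V,|J|\geqslant2}(-1)^{n-|J|}\prod_{e\in\binom J2}\mu(e)+(-1)^{n-1}(n-1)$; this is the number of $(n-1)$-spheres in a wedge homotopy equivalent to the edge inflation $(\Delta_V)_\mu$ of the full simplex on $V$. *)

theory Defs
  imports Main
begin

definition edges2 :: "'a set \<Rightarrow> 'a set set" where
  "edges2 J = {e. e \<subseteq> J \<and> card e = 2}"

definition n_infl :: "('a set \<Rightarrow> nat) \<Rightarrow> 'a set \<Rightarrow> int" where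
  "n_infl \<mu> V =
     (\<Sum>J\<in>{J. J \<subseteq> V \<and> 2 \<le> card J}.
        (-1) ^ (card V - card J) * (\<Prod>e\<in>edges2 J. int (\<mu> e)))
     + (-1) ^ (card V - 1) * (int (card V) - 1)"

end

theory Submission
  imports Defs
begin

text \<open>Writing \<open>\<mu> e = 1 + (\<mu> e - 1)\<close> and expanding every product, \<open>n(\<mu>,V)\<close> becomes a
  combination of the monomials \<open>\<Prod>e\<in>F. \<mu> e - 1\<close> over edge sets \<open>F\<close>. The coefficient of a
  nonempty \<open>F\<close> is an alternating sum over the vertex sets \<open>J\<close> between \<open>\<Union>F\<close> and \<open>V\<close>, which is
  \<open>1\<close> if \<open>F\<close> covers \<open>V\<close> and \<open>0\<close> otherwise. Hence \<open>n(\<mu>,V)\<close> is a constant plus the sum of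
  \<open>\<Prod>e\<in>F. \<mu> e - 1\<close> over the spanning edge sets \<open>F\<close>, and every such product has nonnegative
  factors that increase with \<open>\<mu>\<close>.\<close>

lemma sum_subsupersets_alternating:
  assumes "finite S" "U \<subseteq> S"
  shows "(\<Sum>T | U \<subseteq> T \<and> T \<subseteq> S. (-1::'b::ring_1) ^ (card S - card T)) = (if U = S then 1 else 0)"
proof (cases "U = S")
  case True
  then have "{T. U \<subseteq> T \<and> T \<subseteq> S} = {S}" by auto
  with True show ?thesis by simp
next
  case False
  with assms have "U \<subset> S" by auto
  have fin: "finite {T. U \<subseteq> T \<and> T \<subseteq> S}"
    using assms(1) by (simp add: finite_subset[of _ "Pow S"] subset_eq)
  have alternating: "(\<Sum>T | U \<subseteq> T \<and> T \<subseteq> S. (-1::'b) ^ card T) = 0"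
    by (rule sum_alternating_cancels[OF fin])
      (use card_subsupersets_even_odd[OF assms(1) \<open>U \<subset> S\<close>]
        in \<open>simp add: conj_commute conj_left_commute\<close>)
  have "(\<Sum>T | U \<subseteq> T \<and> T \<subseteq> S. (-1::'b) ^ (card S - card T))
      = (\<Sum>T | U \<subseteq> T \<and> T \<subseteq> S. (-1) ^ card S * (-1) ^ card T)"
    using assms(1) by (intro sum.cong) (auto simp: card_mono neg_one_power_add_eq_neg_one_power_diff
        simp flip: power_add)
  also have "\<dots> = 0"
    by (simp add: alternating flip: sum_distrib_left)
  finally show ?thesis
    using False by simp
qed

lemma finite_edges2: "finite J \<Longrightarrow> finite (edges2 J)"
  unfolding edges2_def by (rule finite_subset[of _ "Pow J"]) auto

lemma edges2_mono: "J \<subseteq> V \<Longrightarrow> edges2 J \<subseteq> edges2 V"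
  unfolding edges2_def by auto

definition n_infl_coeff :: "'a set \<Rightarrow> 'a set set \<Rightarrow> int" where
  "n_infl_coeff V F =
     (\<Sum>J\<in>{J. J \<subseteq> V \<and> 2 \<le> card J}. if F \<subseteq> edges2 J then (-1) ^ (card V - card J) else 0)"

lemma prod_edges2_expand:
  assumes "finite V" "J \<subseteq> V"
  shows "(\<Prod>e\<in>edges2 J. int (\<mu> e)) =
    (\<Sum>F\<in>Pow (edges2 V). if F \<subseteq> edges2 J then (\<Prod>e\<in>F. int (\<mu> e) - 1) else 0)"
proof -
  have fin: "finite (edges2 J)"
    using assms finite_edges2 finite_subset by blast
  have "(\<Prod>e\<in>edges2 J. int (\<mu> e)) = (\<Prod>e\<in>edges2 J. (int (\<mu> e) - 1) + 1)"
    by simp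
  also have "\<dots> = (\<Sum>F\<in>Pow (edges2 J). \<Prod>e\<in>F. int (\<mu> e) - 1)"
    using prod_add[OF fin, of "\<lambda>e. int (\<mu> e) - 1" "\<lambda>_. 1"] by simp
  also have "Pow (edges2 J) = {F \<in> Pow (edges2 V). F \<subseteq> edges2 J}"
    using edges2_mono[OF assms(2)] by auto
  also have "(\<Sum>F\<in>{F \<in> Pow (edges2 V). F \<subseteq> edges2 J}. \<Prod>e\<in>F. int (\<mu> e) - 1) =
      (\<Sum>F\<in>Pow (edges2 V). if F \<subseteq> edges2 J then (\<Prod>e\<in>F. int (\<mu> e) - 1) else 0)"
    by (rule sum.inter_filter) (simp add: assms(1) finite_edges2)
  finally show ?thesis .
qed

lemma n_infl_expand:
  assumes "finite V"
  shows "n_infl \<mu> V =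
    (\<Sum>F\<in>Pow (edges2 V). n_infl_coeff V F * (\<Prod>e\<in>F. int (\<mu> e) - 1))
    + (-1) ^ (card V - 1) * (int (card V) - 1)"
proof -
  let ?\<J> = "{J. J \<subseteq> V \<and> 2 \<le> card J}"
  have "(\<Sum>J\<in>?\<J>. (-1) ^ (card V - card J) * (\<Prod>e\<in>edges2 J. int (\<mu> e)))
      = (\<Sum>J\<in>?\<J>. \<Sum>F\<in>Pow (edges2 V).
          (if F \<subseteq> edges2 J then (-1) ^ (card V - card J) else 0) * (\<Prod>e\<in>F. int (\<mu> e) - 1))"
    using prod_edges2_expand[OF assms] by (auto simp: sum_distrib_left intro!: sum.cong)
  also have "\<dots> = (\<Sum>F\<in>Pow (edges2 V). n_infl_coeff V F * (\<Prod>e\<in>F. int (\<mu> e) - 1))"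
    unfolding n_infl_coeff_def by (subst sum.swap) (simp add: sum_distrib_right)
  finally show ?thesis
    unfolding n_infl_def by simp
qed

lemma n_infl_coeff_nonempty:
  assumes "finite V" "F \<subseteq> edges2 V" "F \<noteq> {}"
  shows "n_infl_coeff V F = (if \<Union>F = V then 1 else 0)"
proof -
  have "{J \<in> {J. J \<subseteq> V \<and> 2 \<le> card J}. F \<subseteq> edges2 J} = {J. \<Union>F \<subseteq> J \<and> J \<subseteq> V}"
  proof (intro equalityI subsetI)
    fix J assume J: "J \<in> {J. \<Union>F \<subseteq> J \<and> J \<subseteq> V}"
    obtain e where "e \<in> F" using assms(3) by auto
    with assms(2) J have "card e = 2" "e \<subseteq> J"
      unfolding edges2_def by auto
    moreover have "finite J"
      using J assms(1) finite_subset by auto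
    ultimately have "2 \<le> card J"
      by (metis card_mono)
    moreover have "F \<subseteq> edges2 J"
      using J assms(2) unfolding edges2_def by auto
    ultimately show "J \<in> {J \<in> {J. J \<subseteq> V \<and> 2 \<le> card J}. F \<subseteq> edges2 J}"
      using J by auto
  qed (auto simp: edges2_def)
  moreover have "\<Union>F \<subseteq> V"
    using assms(2) by (auto simp: edges2_def)
  ultimately show ?thesis
    unfolding n_infl_coeff_def
    by (simp add: sum.inter_filter[symmetric] assms(1) sum_subsupersets_alternating)
qed

lemma n_infl_eq_spanning_sum:
  assumes "finite V"
  shows "n_infl \<mu> V = n_infl (\<lambda>_. 1) V +
    (\<Sum>F | F \<subseteq> edges2 V \<and> F \<noteq> {} \<and> \<Union>F = V. \<Prod>e\<in>F. int (\<mu> e) - 1)"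
proof -
  let ?\<F> = "Pow (edges2 V) - {{}}"
  let ?S = "\<lambda>\<mu>. \<Sum>F\<in>?\<F>. n_infl_coeff V F * (\<Prod>e\<in>F. int (\<mu> e) - 1)"
  have fin: "finite ?\<F>"
    using assms finite_edges2 by blast
  have split: "n_infl \<mu> V = n_infl_coeff V {} + ?S \<mu> + (-1) ^ (card V - 1) * (int (card V) - 1)"
    for \<mu> :: "'a set \<Rightarrow> nat"
    unfolding n_infl_expand[OF assms]
    by (simp add: sum.remove[OF _ Pow_bottom] assms finite_edges2)
  have "?S (\<lambda>_. 1) = 0"
  proof (rule sum.neutral, rule ballI)
    fix F assume "F \<in> ?\<F>"
    then have "finite F" "F \<noteq> {}" using assms finite_edges2 finite_subset by auto
    then show "n_infl_coeff V F * (\<Prod>e\<in>F. int 1 - 1) = 0"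
      by (simp add: card_gt_0_iff)
  qed
  moreover have "?S \<mu> = (\<Sum>F\<in>?\<F>. if \<Union>F = V then \<Prod>e\<in>F. int (\<mu> e) - 1 else 0)"
    using assms by (intro sum.cong) (auto simp: n_infl_coeff_nonempty)
  moreover have "{F \<in> ?\<F>. \<Union>F = V} = {F. F \<subseteq> edges2 V \<and> F \<noteq> {} \<and> \<Union>F = V}"
    by auto
  ultimately show ?thesis
    using split[of \<mu>] split[of "\<lambda>_. 1"] sum.inter_filter[OF fin, symmetric] by simp
qed

theorem corollary4p8:
  fixes V :: "'a set" and \<mu>1 \<mu>2 :: "'a set \<Rightarrow> nat"
  assumes "finite V"
    and "\<forall>e\<in>edges2 V. 0 < \<mu>1 e"
    and "\<forall>e\<in>edges2 V. 0 < \<mu>2 e"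
    and "\<forall>e\<in>edges2 V. \<mu>1 e \<le> \<mu>2 e"
  shows "n_infl \<mu>1 V \<le> n_infl \<mu>2 V"
proof -
  have "0 \<le> int (\<mu>1 e) - 1 \<and> int (\<mu>1 e) - 1 \<le> int (\<mu>2 e) - 1" if "e \<in> edges2 V" for e
    using that assms(2,4) by fastforce
  then have "(\<Prod>e\<in>F. int (\<mu>1 e) - 1) \<le> (\<Prod>e\<in>F. int (\<mu>2 e) - 1)" if "F \<subseteq> edges2 V" for F
    using that by (intro prod_mono) blast
  then have "(\<Sum>F | F \<subseteq> edges2 V \<and> F \<noteq> {} \<and> \<Union>F = V. \<Prod>e\<in>F. int (\<mu>1 e) - 1)
      \<le> (\<Sum>F | F \<subseteq> edges2 V \<and> F \<noteq> {} \<and> \<Union>F = V. \<Prod>e\<in>F. int (\<mu>2 e) - 1)"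
    by (intro sum_mono) blast
  then show ?thesis
    using n_infl_eq_spanning_sum[OF assms(1), of \<mu>1] n_infl_eq_spanning_sum[OF assms(1), of \<mu>2]
    by linarith
qed

end
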